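(* Let $G$ be a finite, simple, connected graph and let $e \in E(G)$ be an edge that is not a cut edge of $G$. Then $$\chi_{dd}(G)-1 \leq \chi_{dd}(G-e) \leq \chi_{dd}(G)+2,$$ where $G-e$ is the graph obtained from $G$ by removing the edge $e$ (keeping all vertices).
   Context: All graphs are finite, undirected and simple. For a vertex $w$, $N(w)$ is its open neighborhood and $N[w]=N(w)\cup\{w\}$ its closed neighborhood. A vertex $w$ dominates a set $S$ of vertices if $S \subseteq N[w]$. A domination coloring of a graph $H$ is a proper vertex coloring of $H$ (adjacent vertices receive different colors; a color class is the set of all vertices receiving a given color) such that every vertex of $H$ dominates at least one color class (possibly its own class), and every color class is dominated by at least one vertex of $H$. The domination chromatic number $\chi_{dd}(H)$ is the minimum number of color classes in a domination coloring of $H$. *)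

theory Defs
  imports Main
begin

definition simple_graph :: "'a set \<Rightarrow> 'a set set \<Rightarrow> bool" where
  "simple_graph V E \<longleftrightarrow> finite V \<and> (\<forall>e\<in>E. e \<subseteq> V \<and> card e = 2)"

definition closed_nbhd :: "'a set set \<Rightarrow> 'a \<Rightarrow> 'a set" where
  "closed_nbhd E w = insert w {u. {u, w} \<in> E}"

definition reachable :: "'a set set \<Rightarrow> 'a \<Rightarrow> 'a \<Rightarrow> bool" where
  "reachable E u v \<longleftrightarrow> (\<lambda>x y. {x, y} \<in> E)\<^sup>*\<^sup>* u v"

definition connected_graph :: "'a set \<Rightarrow> 'a set set \<Rightarrow> bool" where
  "connected_graph V E \<longleftrightarrow> V \<noteq> {} \<and> (\<forall>u\<in>V. \<forall>v\<in>V. reachable E u v)"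

text \<open>A cut edge (bridge): an edge uv whose removal disconnects u from v
  (equivalently, whose removal increases the number of components).\<close>
definition cut_edge :: "'a set set \<Rightarrow> 'a set \<Rightarrow> bool" where
  "cut_edge E e \<longleftrightarrow> e \<in> E \<and> (\<exists>u v. e = {u, v} \<and> \<not> reachable (E - {e}) u v)"

definition color_class :: "'a set \<Rightarrow> ('a \<Rightarrow> nat) \<Rightarrow> nat \<Rightarrow> 'a set" where
  "color_class V c i = {v \<in> V. c v = i}"

definition dom_coloring :: "'a set \<Rightarrow> 'a set set \<Rightarrow> ('a \<Rightarrow> nat) \<Rightarrow> bool" where
  "dom_coloring V E c \<longleftrightarrow>
     (\<forall>u\<in>V. \<forall>v\<in>V. {u, v} \<in> E \<longrightarrow> c u \<noteq> c v) \<and>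
     (\<forall>w\<in>V. \<exists>i\<in>c ` V. color_class V c i \<subseteq> closed_nbhd E w) \<and>
     (\<forall>i\<in>c ` V. \<exists>w\<in>V. color_class V c i \<subseteq> closed_nbhd E w)"

definition chi_dd :: "'a set \<Rightarrow> 'a set set \<Rightarrow> nat" where
  "chi_dd V E = (LEAST k. \<exists>c. dom_coloring V E c \<and> card (c ` V) = k)"

end

theory Submission
  imports Defs
begin

text \<open>Let the edge sets \<open>E\<^sub>1\<close> and \<open>E\<^sub>2\<close> on \<open>V\<close> differ only near a vertex set \<open>S\<close>:
  every edge lost lies inside \<open>S\<close> and every edge gained meets \<open>S\<close>. Take an optimal
  domination colouring of \<open>(V, E\<^sub>1)\<close> and give each vertex of \<open>S\<close> its own fresh colour.
  The result is proper for \<open>E\<^sub>2\<close>, since old colour classes shrink to sets avoiding \<open>S\<close>;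
  vertices of \<open>S\<close> dominate their singleton classes, the other vertices keep their
  neighbourhoods, and a shrunk class is still dominated by its old dominator.
  Hence \<open>\<chi>\<^sub>d\<^sub>d(V, E\<^sub>2) \<le> \<chi>\<^sub>d\<^sub>d(V, E\<^sub>1) + |S|\<close>. For \<open>e = {x, y}\<close>, deleting \<open>e\<close> is such a
  change with \<open>S = {x, y}\<close> and adding it back is one with \<open>S = {x}\<close>.\<close>

lemma simple_graph_no_loop:
  assumes "simple_graph V E"
  shows "{u} \<notin> E"
proof
  assume "{u} \<in> E"
  then have "card {u} = 2" using assms unfolding simple_graph_def by blast
  then show False by simp
qed

lemma simple_graph_Diff:
  assumes "simple_graph V E"
  shows "simple_graph V (E - F)"
  using assms unfolding simple_graph_def by simp

lemma closed_nbhd_self: "w \<in> closed_nbhd E w"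
  unfolding closed_nbhd_def by simp

lemma dom_coloringI:
  assumes "\<And>u v. u \<in> V \<Longrightarrow> v \<in> V \<Longrightarrow> {u, v} \<in> E \<Longrightarrow> c u \<noteq> c v"
    and "\<And>w. w \<in> V \<Longrightarrow> \<exists>i\<in>c ` V. color_class V c i \<subseteq> closed_nbhd E w"
    and "\<And>i. i \<in> c ` V \<Longrightarrow> \<exists>w\<in>V. color_class V c i \<subseteq> closed_nbhd E w"
  shows "dom_coloring V E c"
  using assms unfolding dom_coloring_def by simp

lemma dom_coloring_properD:
  "dom_coloring V E c \<Longrightarrow> u \<in> V \<Longrightarrow> v \<in> V \<Longrightarrow> {u, v} \<in> E \<Longrightarrow> c u \<noteq> c v"
  unfolding dom_coloring_def by simp

lemma dom_coloring_dominatingD: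
  "dom_coloring V E c \<Longrightarrow> w \<in> V \<Longrightarrow> \<exists>i\<in>c ` V. color_class V c i \<subseteq> closed_nbhd E w"
  unfolding dom_coloring_def by simp

lemma dom_coloring_dominatedD:
  "dom_coloring V E c \<Longrightarrow> i \<in> c ` V \<Longrightarrow> \<exists>w\<in>V. color_class V c i \<subseteq> closed_nbhd E w"
  unfolding dom_coloring_def by blast

lemma color_class_inj_on:
  assumes "inj_on c V" and "v \<in> V"
  shows "color_class V c (c v) = {v}"
  using assms unfolding color_class_def inj_on_def by auto

lemma dom_coloring_inj_on:
  assumes "simple_graph V E" and inj: "inj_on c V"
  shows "dom_coloring V E c"
proof (rule dom_coloringI)
  fix u v assume uv: "u \<in> V" "v \<in> V" "{u, v} \<in> E"
  show "c u \<noteq> c v"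
  proof
    assume "c u = c v"
    then have "u = v" using uv(1,2) by (rule inj_onD[OF inj])
    then show False using uv(3) simple_graph_no_loop[OF assms(1)] by simp
  qed
next
  fix w assume "w \<in> V"
  then show "\<exists>i\<in>c ` V. color_class V c i \<subseteq> closed_nbhd E w"
    using color_class_inj_on[OF inj] closed_nbhd_self by (intro bexI[of _ "c w"]) auto
next
  fix i assume "i \<in> c ` V"
  then obtain v where "v \<in> V" "i = c v" by blast
  then show "\<exists>w\<in>V. color_class V c i \<subseteq> closed_nbhd E w"
    using color_class_inj_on[OF inj] closed_nbhd_self by (intro bexI[of _ v]) auto
qed

lemma chi_dd_le:
  assumes "dom_coloring V E c"
  shows "chi_dd V E \<le> card (c ` V)"
  unfolding chi_dd_def using assms by (intro Least_le) blast

lemma chi_dd_attained: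
  assumes "simple_graph V E"
  obtains c where "dom_coloring V E c" and "card (c ` V) = chi_dd V E"
proof -
  have "finite V" using assms unfolding simple_graph_def by simp
  then obtain g :: "'a \<Rightarrow> nat" where "inj_on g V"
    using finite_imp_inj_to_nat_seg by blast
  then have "\<exists>k c. dom_coloring V E c \<and> card (c ` V) = k"
    using dom_coloring_inj_on[OF assms] by blast
  then show ?thesis
    using that LeastI_ex[of "\<lambda>k. \<exists>c. dom_coloring V E c \<and> card (c ` V) = k"]
    unfolding chi_dd_def by blast
qed

lemma fresh_inj_on_nat:
  fixes C :: "nat set"
  assumes "finite S" and "finite C"
  obtains g :: "'a \<Rightarrow> nat" where "inj_on g S" and "g ` S \<inter> C = {}"
proof -
  obtain F where F: "finite F" "card F = card S" "F \<subseteq> - C"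
    using infinite_arbitrarily_large[of "- C" "card S"] assms(2) by auto
  then obtain g where "g ` S \<subseteq> F" "inj_on g S"
    using card_le_inj[OF assms(1) F(1)] by auto
  with F(3) show ?thesis using that by blast
qed

locale recoloring =
  fixes V :: "'a set" and E\<^sub>1 E\<^sub>2 :: "'a set set" and S :: "'a set" and c c' :: "'a \<Rightarrow> nat"
  assumes dom_coloring: "dom_coloring V E\<^sub>1 c"
    and simple: "simple_graph V E\<^sub>2"
    and S_subset: "S \<subseteq> V"
    and lost: "\<And>f. f \<in> E\<^sub>1 - E\<^sub>2 \<Longrightarrow> f \<subseteq> S"
    and gained: "\<And>f. f \<in> E\<^sub>2 - E\<^sub>1 \<Longrightarrow> f \<inter> S \<noteq> {}"
    and off: "\<And>v. v \<in> V - S \<Longrightarrow> c' v = c v"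
    and inj: "inj_on c' S"
    and fresh: "c' ` S \<inter> c ` V = {}"
begin

lemma color_class_fresh:
  assumes "s \<in> S"
  shows "color_class V c' (c' s) = {s}"
proof -
  have "v = s" if "v \<in> V" "c' v = c' s" for v
  proof (cases "v \<in> S")
    case True
    show ?thesis by (rule inj_onD[OF inj that(2) True \<open>s \<in> S\<close>])
  next
    case False
    then have "c' s = c v" using that off by simp
    then have "c' s \<in> c ` V" using \<open>v \<in> V\<close> by simp
    then show ?thesis using \<open>s \<in> S\<close> fresh by blast
  qed
  then show ?thesis using \<open>s \<in> S\<close> S_subset unfolding color_class_def by blast
qed

lemma color_class_old:
  assumes "i \<in> c ` V"
  shows "color_class V c' i = color_class V c i - S"
proof (rule set_eqI)
  fix v
  have recolored: "v \<notin> S" if "c' v = i"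
    using that assms fresh by blast
  show "v \<in> color_class V c' i \<longleftrightarrow> v \<in> color_class V c i - S"
  proof (cases "v \<in> V - S")
    case True
    then show ?thesis using off unfolding color_class_def by simp
  next
    case False
    then show ?thesis using recolored unfolding color_class_def by blast
  qed
qed

lemma closed_nbhd_Diff_subset: "closed_nbhd E\<^sub>1 w - S \<subseteq> closed_nbhd E\<^sub>2 w"
  using lost unfolding closed_nbhd_def by blast

lemma closed_nbhd_subset:
  assumes "w \<notin> S"
  shows "closed_nbhd E\<^sub>1 w \<subseteq> closed_nbhd E\<^sub>2 w"
  using lost assms unfolding closed_nbhd_def by blast

lemma fresh_neq_old:
  assumes "u \<in> S" and "v \<in> V - S"
  shows "c' u \<noteq> c' v"
proof -
  have "c' v = c v" using off assms(2) .
  then have "c' v \<in> c ` V" using assms(2) by blast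
  moreover have "c' u \<in> c' ` S" using assms(1) by (rule imageI)
  ultimately show ?thesis using fresh by (metis IntI empty_iff)
qed

lemma proper:
  assumes "u \<in> V" and "v \<in> V" and "{u, v} \<in> E\<^sub>2"
  shows "c' u \<noteq> c' v"
proof -
  have "u \<noteq> v" using assms(3) simple_graph_no_loop[OF simple, of u] by auto
  consider "u \<in> S" "v \<in> S" | "u \<in> S" "v \<notin> S" | "u \<notin> S" "v \<in> S" | "u \<notin> S" "v \<notin> S"
    by blast
  then show ?thesis
  proof cases
    case 1
    then show ?thesis using \<open>u \<noteq> v\<close> inj_onD[OF inj] by blast
  next
    case 2
    then show ?thesis using fresh_neq_old assms(2) by blast
  next
    case 3
    then show ?thesis using fresh_neq_old[of v u] assms(1) by auto
  next
    case 4
    then have "{u, v} \<in> E\<^sub>1" using gained assms(3) by blast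
    then have "c u \<noteq> c v" using assms(1,2) dom_coloring_properD[OF dom_coloring] by blast
    then show ?thesis using 4 assms(1,2) off by simp
  qed
qed

lemma dominating:
  assumes "w \<in> V"
  shows "\<exists>i\<in>c' ` V. color_class V c' i \<subseteq> closed_nbhd E\<^sub>2 w"
proof (cases "w \<in> S")
  case True
  then show ?thesis
    using assms color_class_fresh closed_nbhd_self by (intro bexI[of _ "c' w"]) auto
next
  case False
  obtain i where i: "i \<in> c ` V" "color_class V c i \<subseteq> closed_nbhd E\<^sub>2 w"
    using dom_coloring_dominatingD[OF dom_coloring assms] closed_nbhd_subset[OF False] by blast
  show ?thesis
  proof (cases "color_class V c i \<subseteq> S")
    case True
    obtain v where "v \<in> V" "c v = i" using i(1) by blast
    then have "v \<in> S" "v \<in> closed_nbhd E\<^sub>2 w"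
      using True i(2) unfolding color_class_def by auto
    then show ?thesis
      using S_subset color_class_fresh by (intro bexI[of _ "c' v"]) auto
  next
    case False
    then obtain v where "v \<in> V - S" "c v = i" unfolding color_class_def by auto
    then have "i \<in> c' ` V" using off by (metis DiffD1 imageI)
    then show ?thesis using i color_class_old by (intro bexI[of _ i]) auto
  qed
qed

lemma dominated:
  assumes "i \<in> c' ` V"
  shows "\<exists>w\<in>V. color_class V c' i \<subseteq> closed_nbhd E\<^sub>2 w"
proof -
  obtain v where v: "v \<in> V" "i = c' v" using assms by blast
  show ?thesis
  proof (cases "v \<in> S")
    case True
    then show ?thesis using v color_class_fresh closed_nbhd_self by (intro bexI[of _ v]) auto
  next
    case False
    then have "i = c v" using v off by simp
    then obtain w where "w \<in> V" "color_class V c i \<subseteq> closed_nbhd E\<^sub>1 w"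
      using dom_coloring_dominatedD[OF dom_coloring] v(1) by blast
    then show ?thesis
      using color_class_old[of i] \<open>i = c v\<close> v(1) closed_nbhd_Diff_subset
      by (intro bexI[of _ w]) auto
  qed
qed

lemma dom_coloring_recolored: "dom_coloring V E\<^sub>2 c'"
  using proper dominating dominated by (rule dom_coloringI)

end

lemma chi_dd_local_change_le:
  assumes simple\<^sub>1: "simple_graph V E\<^sub>1" and simple\<^sub>2: "simple_graph V E\<^sub>2" and "S \<subseteq> V"
    and lost: "\<And>f. f \<in> E\<^sub>1 - E\<^sub>2 \<Longrightarrow> f \<subseteq> S"
    and gained: "\<And>f. f \<in> E\<^sub>2 - E\<^sub>1 \<Longrightarrow> f \<inter> S \<noteq> {}"
  shows "chi_dd V E\<^sub>2 \<le> chi_dd V E\<^sub>1 + card S"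
proof -
  have "finite V" using simple\<^sub>1 unfolding simple_graph_def by simp
  then have fin: "finite S" "finite (c ` V)" for c :: "'a \<Rightarrow> nat"
    using \<open>S \<subseteq> V\<close> finite_subset by auto
  obtain c where c: "dom_coloring V E\<^sub>1 c" "card (c ` V) = chi_dd V E\<^sub>1"
    using chi_dd_attained[OF simple\<^sub>1] .
  obtain g where g: "inj_on g S" "g ` S \<inter> c ` V = {}"
    using fresh_inj_on_nat[OF fin] .
  define c' where "c' v = (if v \<in> S then g v else c v)" for v
  interpret recoloring V E\<^sub>1 E\<^sub>2 S c c'
  proof (rule recoloring.intro)
    show "inj_on c' S" "c' ` S \<inter> c ` V = {}"
      using g unfolding c'_def by (simp_all add: inj_on_def)
  qed (use c(1) simple\<^sub>2 \<open>S \<subseteq> V\<close> lost gained in \<open>simp_all add: c'_def\<close>)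
  have "chi_dd V E\<^sub>2 \<le> card (c' ` V)"
    using dom_coloring_recolored by (rule chi_dd_le)
  also have "\<dots> \<le> card (c ` V \<union> g ` S)"
    using fin by (intro card_mono) (auto simp: c'_def)
  also have "\<dots> \<le> card (c ` V) + card S"
    using card_Un_le[of "c ` V" "g ` S"] card_image_le[OF fin(1), of g] by linarith
  finally show ?thesis using c(2) by simp
qed

theorem theorem2:
  fixes V :: "'a set" and E :: "'a set set" and e :: "'a set"
  assumes "simple_graph V E"
    and "connected_graph V E"
    and "e \<in> E"
    and "\<not> cut_edge E e"
  shows "chi_dd V E \<le> chi_dd V (E - {e}) + 1 \<and> chi_dd V (E - {e}) \<le> chi_dd V E + 2"
proof -
  obtain x y where e: "e = {x, y}" "x \<noteq> y" "x \<in> V" "y \<in> V"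
    using assms(1,3) unfolding simple_graph_def by (metis card_2_iff insert_subset)
  have simple_minus: "simple_graph V (E - {e})"
    using simple_graph_Diff[OF assms(1)] .
  have "chi_dd V E \<le> chi_dd V (E - {e}) + card {x}"
    using e assms(3) by (intro chi_dd_local_change_le[OF simple_minus assms(1)]) auto
  moreover have "chi_dd V (E - {e}) \<le> chi_dd V E + card {x, y}"
    using e by (intro chi_dd_local_change_le[OF assms(1) simple_minus]) auto
  ultimately show ?thesis using e(2) by simp
qed

end
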